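(* Let $f:[\frac13,2]\to[\frac13,2]$ be defined by $f(x)=2x$ if $x\in[\frac13,1)$ and $f(x)=\frac{x}{3}$ if $x\in[1,2]$. For every nonempty open interval $I\subseteq[\frac13,2]$ there exists an integer $N$ such that for every $x\in[\frac13,2]$ and every $n\ge0$ with $f^n(x)\in I$, there is $m$ with $n<m\le n+N$ and $f^m(x)\in I$; i.e. the number of iterations of $f$ between two successive visits of an orbit to $I$ is bounded uniformly. *)

theory Defs
  imports Complex_Main
begin

text \<open>The map f on [1/3,2]: f(x) = 2x on [1/3,1), f(x) = x/3 on [1,2].
  Outside [1/3,2] the value is irrelevant (the domain is invariant).\<close>
definition fmap :: "real \<Rightarrow> real" where
  "fmap x = (if x < 1 then 2 * x else x / 3)"

end

theory Submission
  imports Defs "HOL-Analysis.Kronecker_Approximation_Theorem"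
begin

text \<open>In the coordinate \<open>ln x\<close>, taken modulo \<open>ln 6\<close>, the map \<open>f\<close> is the rotation by \<open>ln 2\<close>
  of a circle of length \<open>ln 6\<close>: both branches add \<open>ln 2\<close> modulo \<open>ln 6\<close>, and a point of
  \<open>[1/3, 2]\<close> lying in the open interval is determined by its class. Since \<open>2\<^sup>k \<noteq> 6\<^sup>h\<close>,
  the ratio \<open>ln 2 / ln 6\<close> is irrational, so Dirichlet's approximation theorem gives \<open>k > 0\<close> such
  that \<open>f\<^sup>k\<close> is a rotation by some \<open>r \<noteq> 0\<close> with \<open>|r| < ln b - ln a\<close>. Iterating \<open>f\<^sup>k\<close> at most
  about \<open>ln 6 / |r|\<close> times moves any point into \<open>(ln a, ln b)\<close>.\<close>

lemma exists_int_translate_in_interval: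
  fixes A x r :: real
  assumes "r > 0"
  obtains i :: int where "A < x + i * r" "x + i * r \<le> A + r"
proof -
  define i where "i = \<lfloor>(A - x) / r\<rfloor> + 1"
  have "i - 1 \<le> (A - x) / r" "(A - x) / r < i"
    unfolding i_def by linarith+
  then have "(i - 1) * r \<le> A - x" "A - x < i * r"
    using assms by (simp_all add: pos_le_divide_eq pos_divide_less_eq)
  then show thesis
    by (intro that[of i]) (simp_all add: algebra_simps)
qed

lemma arith_progression_hits_interval_mod_pos:
  fixes A B u r l :: real
  assumes "l > 0" "0 < r" "r < B - A"
  obtains j :: nat and t :: int
  where "1 \<le> j" "real j \<le> l / r + 1" "A < u + j * r + t * l" "u + j * r + t * l < B"
proof -
  obtain t :: int where t: "A - l < u + t * l" "u + t * l \<le> A"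
    using exists_int_translate_in_interval[OF assms(1), of "A - l" u] by auto
  define v where "v = u + t * l"
  obtain i :: int where i: "A < v + i * r" "v + i * r \<le> A + r"
    using exists_int_translate_in_interval[OF assms(2)] .
  have "0 < i * r" "i * r < l + r"
    using i t unfolding v_def by linarith+
  then have "0 < i" "i < (l + r) / r"
    using assms(2) by (simp_all add: zero_less_mult_iff pos_less_divide_eq)
  then have "0 < i" "i < l / r + 1"
    using assms(2) by (simp_all add: add_divide_distrib)
  then show thesis
    using i assms(3) unfolding v_def
    by (intro that[of "nat i" t]) (simp_all add: algebra_simps)
qed

lemma arith_progression_hits_interval_mod:
  fixes A B u r l :: real
  assumes "l > 0" "r \<noteq> 0" "\<bar>r\<bar> < B - A"
  obtains j :: nat and t :: int
  where "1 \<le> j" "real j \<le> l / \<bar>r\<bar> + 1" "A < u + j * r + t * l" "u + j * r + t * l < B"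
proof (cases "r > 0")
  case True
  then show thesis
    using arith_progression_hits_interval_mod_pos[OF assms(1) True, of B A u] assms(3) that by auto
next
  case False
  then have "0 < - r" "- r < - A - - B"
    using assms(2,3) by auto
  then obtain j :: nat and t :: int
    where "1 \<le> j" "real j \<le> l / - r + 1" "- B < - u + j * - r + t * l" "- u + j * - r + t * l < - A"
    using arith_progression_hits_interval_mod_pos[OF assms(1), of "- r" "- A" "- B" "- u"] by blast
  then show thesis
    using False by (intro that[of j "- t"]) auto
qed

lemma small_nonzero_multiple_mod:
  fixes \<alpha> l \<epsilon> :: real
  assumes "l > 0" "\<epsilon> > 0"
    and incommensurable: "\<And>k h. k > 0 \<Longrightarrow> of_int k * \<alpha> \<noteq> of_int h * l"
  obtains k h :: int where "k > 0" "k * \<alpha> - h * l \<noteq> 0" "\<bar>k * \<alpha> - h * l\<bar> < \<epsilon>"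
proof -
  obtain N :: nat where N: "N > 0" "1 / N < \<epsilon> / l"
    using assms(1,2) by (metis divide_pos_pos gr_zeroI inverse_eq_divide real_arch_inverse)
  obtain h k where hk: "0 < k" "\<bar>of_int k * (\<alpha> / l) - of_int h\<bar> < 1 / N"
    using Dirichlet_approx[OF N(1)] by blast
  have "k * \<alpha> - h * l = l * (of_int k * (\<alpha> / l) - of_int h)"
    using assms(1) by (simp add: field_simps)
  then have "\<bar>k * \<alpha> - h * l\<bar> = l * \<bar>of_int k * (\<alpha> / l) - of_int h\<bar>"
    using assms(1) by (simp add: abs_mult)
  also have "\<dots> < l * (1 / N)"
    by (rule mult_strict_left_mono[OF hk(2) assms(1)])
  also have "\<dots> < \<epsilon>"
    using N(2) assms(1) by (simp add: pos_less_divide_eq mult.commute)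
  finally show thesis
    using that hk(1) incommensurable[OF hk(1), of h] by simp
qed

lemma two_pow_ne_six_pow:
  fixes k h :: nat
  assumes "k > 0"
  shows "(2::nat) ^ k \<noteq> 6 ^ h"
proof (cases "h = 0")
  case True
  then show ?thesis using assms by simp
next
  case False
  then have "(6::nat) dvd 6 ^ h"
    by simp
  then have "(3::nat) dvd 6 ^ h"
    by (rule dvd_trans[rotated]) simp
  moreover have "\<not> (3::nat) dvd 2 ^ k"
    using prime_dvd_power[of "3::nat" 2 k] by auto
  ultimately show ?thesis by metis
qed

lemma ln_6: "ln (6::real) = ln 2 + ln 3"
  using ln_mult[of 2 3] by simp

lemma ln_6_incommensurable:
  fixes k h :: int
  assumes "k > 0"
  shows "of_int k * ln 2 \<noteq> of_int h * ln (6::real)"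
proof
  assume eq: "of_int k * ln 2 = of_int h * ln (6::real)"
  have "h > 0"
  proof (rule ccontr)
    assume "\<not> h > 0"
    then have "of_int h * ln (6::real) \<le> 0"
      by (simp add: mult_nonpos_nonneg)
    moreover have "of_int k * ln (2::real) > 0"
      using assms by simp
    ultimately show False
      using eq by simp
  qed
  then have "ln ((2::real) ^ nat k) = ln (6 ^ nat h)"
    using eq assms by (simp add: ln_realpow)
  then have "(2::real) ^ nat k = 6 ^ nat h"
    by simp
  then have "(2::nat) ^ nat k = 6 ^ nat h"
    by (metis of_nat_eq_iff of_nat_numeral of_nat_power)
  then show False
    using two_pow_ne_six_pow assms by simp
qed

lemma fmap_mem: "x \<in> {1/3..2} \<Longrightarrow> fmap x \<in> {1/3..(2::real)}"
  unfolding fmap_def by auto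

lemma funpow_fmap_mem: "x \<in> {1/3..2} \<Longrightarrow> (fmap ^^ n) x \<in> {1/3..(2::real)}"
  by (induction n) (use fmap_mem in auto)

lemma ln_fmap:
  assumes "x \<in> {1/3..(2::real)}"
  obtains q :: int where "ln (fmap x) = ln x + ln 2 - q * ln 6"
proof (cases "x < 1")
  case True
  then show thesis
    using assms by (intro that[of 0]) (simp add: fmap_def ln_mult)
next
  case False
  then show thesis
    using assms by (intro that[of 1]) (simp add: fmap_def ln_div ln_6)
qed

lemma ln_funpow_fmap:
  assumes "x \<in> {1/3..(2::real)}"
  shows "\<exists>q::int. ln ((fmap ^^ n) x) = ln x + n * ln 2 - q * ln 6"
proof (induction n)
  case 0
  show ?case by (intro exI[of _ 0]) simp
next
  case (Suc n)
  then obtain q :: int where q: "ln ((fmap ^^ n) x) = ln x + n * ln 2 - q * ln 6"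
    by blast
  obtain q' :: int where "ln (fmap ((fmap ^^ n) x)) = ln ((fmap ^^ n) x) + ln 2 - q' * ln 6"
    using ln_fmap[OF funpow_fmap_mem[OF assms]] .
  then show ?case
    using q by (intro exI[of _ "q + q'"]) (simp add: algebra_simps)
qed

lemma ln_eq_if_congruent_mod_ln6:
  fixes y w :: real and t :: int
  assumes "y \<in> {1/3..2}" "ln (1/3) < w" "w < ln 2"
    and "ln y - w = t * ln 6"
  shows "ln y = w"
proof -
  have "ln (1/3) \<le> ln y" "ln y \<le> ln 2"
    using assms(1) by auto
  moreover have "ln 2 - ln (1/3) = ln (6::real)"
    by (simp add: ln_div ln_6)
  ultimately have "\<bar>of_int t * ln 6\<bar> < ln (6::real)"
    using assms(2-4) by linarith
  then have "\<bar>of_int t\<bar> < (1::real)"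
    by (simp add: abs_mult)
  then have "t = 0"
    by linarith
  then show ?thesis
    using assms(4) by simp
qed

lemma fmap_uniform_return_time:
  fixes a b :: real
  assumes "1/3 \<le> a" "a < b" "b \<le> 2"
  shows "\<exists>N. \<forall>z \<in> {1/3..2}. \<exists>m. 0 < m \<and> m \<le> N \<and> (fmap ^^ m) z \<in> {a<..<b}"
proof -
  define l where "l = ln (6::real)"
  have "l > 0" "ln a < ln b"
    using assms unfolding l_def by simp_all
  then obtain k h :: int where k: "k > 0"
    and r: "k * ln 2 - h * l \<noteq> 0" "\<bar>k * ln 2 - h * l\<bar> < ln b - ln a"
    using small_nonzero_multiple_mod[of l "ln b - ln a" "ln 2"] ln_6_incommensurable
    unfolding l_def by auto
  define r where "r = k * ln 2 - h * l"
  define M where "M = nat \<lceil>l / \<bar>r\<bar>\<rceil> + 1"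
  have "\<exists>m. 0 < m \<and> m \<le> nat k * M \<and> (fmap ^^ m) z \<in> {a<..<b}"
    if z: "z \<in> {1/3..2}" for z
  proof -
    obtain j :: nat and t :: int where j: "1 \<le> j" "real j \<le> l / \<bar>r\<bar> + 1"
      and w: "ln a < ln z + j * r + t * l" "ln z + j * r + t * l < ln b"
      using arith_progression_hits_interval_mod[OF \<open>l > 0\<close>, where A="ln a" and B="ln b" and u="ln z"] r
      unfolding r_def by blast
    define y where "y = (fmap ^^ (j * nat k)) z"
    have y_mem: "y \<in> {1/3..2}"
      unfolding y_def using funpow_fmap_mem[OF z] .
    obtain q :: int where q: "ln y = ln z + (j * nat k) * ln 2 - q * l"
      using ln_funpow_fmap[OF z] unfolding y_def l_def by blast
    have "ln y - (ln z + j * r + t * l) = of_int (j * h - q - t) * ln 6"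
      using k unfolding q r_def l_def by (simp add: algebra_simps)
    moreover have "ln (1/3) \<le> ln a" "ln b \<le> ln 2"
      using assms by simp_all
    then have "ln (1/3) < ln z + j * r + t * l" "ln z + j * r + t * l < ln 2"
      using w by linarith+
    ultimately have "ln y = ln z + j * r + t * l"
      using ln_eq_if_congruent_mod_ln6[OF y_mem] by blast
    then have "ln a < ln y" "ln y < ln b"
      using w by simp_all
    then have "y \<in> {a<..<b}"
      using y_mem assms by simp
    moreover have "j \<le> M"
      using j(2) unfolding M_def by linarith
    then have "j * nat k \<le> nat k * M"
      by (simp add: mult.commute)
    moreover have "0 < j * nat k"
      using j(1) k by simp
    ultimately show ?thesis
      unfolding y_def by blast
  qed
  then show ?thesis
    by blast
qed

theorem mainTheorem3:
  fixes a b :: real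
  assumes "1/3 \<le> a" and "a < b" and "b \<le> 2"
  shows "\<exists>N::nat. \<forall>x \<in> {1/3..2}. \<forall>n::nat.
           (fmap ^^ n) x \<in> {a<..<b} \<longrightarrow>
           (\<exists>m. n < m \<and> m \<le> n + N \<and> (fmap ^^ m) x \<in> {a<..<b})"
proof -
  obtain N where N: "\<forall>z \<in> {1/3..2}. \<exists>m. 0 < m \<and> m \<le> N \<and> (fmap ^^ m) z \<in> {a<..<b}"
    using fmap_uniform_return_time[OF assms] by blast
  have "\<exists>m. n < m \<and> m \<le> n + N \<and> (fmap ^^ m) x \<in> {a<..<b}"
    if x: "x \<in> {1/3..2}" for x n
  proof -
    obtain d where "0 < d" "d \<le> N" "(fmap ^^ d) ((fmap ^^ n) x) \<in> {a<..<b}"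
      using N funpow_fmap_mem[OF x] by blast
    then show ?thesis
      by (intro exI[of _ "d + n"]) (simp add: funpow_add)
  qed
  then show ?thesis
    by blast
qed

end
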